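(* Let $n>3$ be an integer and $[n]=\{0,1,\dots,n-1\}$. Let $B_0,B_1,\dots,B_m$ ($m\ge 1$) be a sequence of $3$-element subsets of $[n]$ such that $|B_t\setminus B_{t+1}|=1$ for every $0\le t<m$. For $0\le t<m$ let $e_t$ denote the unique element of $B_t\setminus B_{t+1}$ (the partition evicted after state $t$), and for $1\le t\le m$ let $\ell_t$ denote the unique element of $B_t\setminus B_{t-1}$ (the partition just loaded into state $t$). Suppose that: (1) for every $1\le t<m$, $\ell_t\neq e_t$; and (2) for every pair $a\neq b$ in $[n]$, the set $\{t\in\{0,\dots,m\} : \{a,b\}\subseteq B_t\}$ is a set of consecutive integers (possibly empty). Then the sequence is a Prefetching Supported Order: for every $0\le t<m$ there exists an edge bucket $(a,b)\in[n]^2$ that is pending at state $t$ and satisfies $e_t\notin\{a,b\}$.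
   Context: Node embeddings are split into $n$ partitions indexed by $[n]$; an edge bucket is an ordered pair $(a,b)\in[n]^2$. The GPU buffer holds exactly $3$ partitions at a time; the buffer states are the sets $B_0,\dots,B_m$, and consecutive states differ by swapping out exactly one partition and swapping in exactly one other. An edge bucket $(a,b)$ is processed at the first buffer state containing both $a$ and $b$; accordingly, $(a,b)$ is called pending at state $t$ if $\{a,b\}\subseteq B_t$ and there is no $s<t$ with $\{a,b\}\subseteq B_s$. A sequence of buffer states is a Prefetching Supported Order if for every $0\le t<m$ there is at least one edge bucket pending at state $t$ that does not involve the partition $e_t$ scheduled for eviction (so that this bucket can be computed while $e_t$ is swapped out and the next partition is loaded). *)

theory Defs
  imports Main
begin

text \<open>Buffer states are given as a function B :: nat \<Rightarrow> nat set, of which only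
  B 0, ..., B m are relevant. Partitions are [n] = {0..<n}.\<close>

definition evicted :: "(nat \<Rightarrow> nat set) \<Rightarrow> nat \<Rightarrow> nat" where
  "evicted B t = the_elem (B t - B (Suc t))"

definition loaded :: "(nat \<Rightarrow> nat set) \<Rightarrow> nat \<Rightarrow> nat" where
  "loaded B t = the_elem (B t - B (t - 1))"

definition pending :: "(nat \<Rightarrow> nat set) \<Rightarrow> nat \<Rightarrow> nat \<Rightarrow> nat \<Rightarrow> bool" where
  "pending B t a b \<longleftrightarrow> {a, b} \<subseteq> B t \<and> \<not> (\<exists>s<t. {a, b} \<subseteq> B s)"

definition prefetching_supported_order ::
    "nat \<Rightarrow> (nat \<Rightarrow> nat set) \<Rightarrow> nat \<Rightarrow> bool" where
  "prefetching_supported_order n B m \<longleftrightarrow>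
     (\<forall>t<m. \<exists>a b. a < n \<and> b < n \<and> pending B t a b \<and> evicted B t \<notin> {a, b})"

end

theory Submission
  imports Defs
begin

text \<open>At state 0 every bucket inside the buffer is pending, so the self-bucket of a partition
  other than the evicted one works. At a later state t, let l be the partition just loaded and
  y the third partition, distinct from l and from the evicted one. Since l was absent at
  state t - 1, the pair {l, y} is not contained in the buffer there; as the states containing
  {l, y} are consecutive, it is contained in no earlier state either, so (l, y) is pending
  at t.\<close>

definition consecutive_pair :: "(nat \<Rightarrow> nat set) \<Rightarrow> nat \<Rightarrow> nat \<Rightarrow> nat \<Rightarrow> bool" where
  "consecutive_pair B m a b \<longleftrightarrow>
     (\<forall>i j k. i \<le> j \<and> j \<le> k \<and> k \<le> m \<and> {a, b} \<subseteq> B i \<and> {a, b} \<subseteq> B k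
        \<longrightarrow> {a, b} \<subseteq> B j)"

lemma card_Diff_commute:
  assumes "finite A" "finite B" "card A = card B"
  shows "card (A - B) = card (B - A)"
  using assms by (simp add: card_Diff_subset_Int Int_commute)

lemma card_ge_3_obtains_other:
  assumes "card A \<ge> 3"
  obtains y where "y \<in> A" "y \<noteq> a" "y \<noteq> b"
proof -
  have "\<not> A \<subseteq> {a, b}"
  proof
    assume "A \<subseteq> {a, b}"
    then have "card A \<le> card {a, b}"
      by (rule card_mono[rotated]) simp
    also have "\<dots> \<le> 2"
      by (simp add: card_insert_le_m1)
    finally show False
      using assms by simp
  qed
  then show ?thesis
    using that by blast
qed

lemma the_elem_mem_if_card_1: "card X = 1 \<Longrightarrow> the_elem X \<in> X"
  by (metis card_1_singletonE the_elem_eq singletonI)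

lemma loaded_mem:
  assumes "card (B (Suc p) - B p) = 1"
  shows "loaded B (Suc p) \<in> B (Suc p)" "loaded B (Suc p) \<notin> B p"
  using the_elem_mem_if_card_1[OF assms] by (simp_all add: loaded_def)

lemma pending_0_iff: "pending B 0 a b \<longleftrightarrow> {a, b} \<subseteq> B 0"
  by (simp add: pending_def)

lemma pending_if_not_subset_previous:
  assumes "consecutive_pair B m a b" "Suc p \<le> m"
    and "{a, b} \<subseteq> B (Suc p)" "\<not> {a, b} \<subseteq> B p"
  shows "pending B (Suc p) a b"
  unfolding pending_def
proof (intro conjI notI)
  show "{a, b} \<subseteq> B (Suc p)" by fact
  assume "\<exists>s<Suc p. {a, b} \<subseteq> B s"
  then obtain s where "s \<le> p" "{a, b} \<subseteq> B s"
    by (auto simp: less_Suc_eq_le)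
  then have "{a, b} \<subseteq> B p"
    using assms(1)[unfolded consecutive_pair_def, rule_format, of s p "Suc p"] assms(2,3)
    by simp
  with assms(4) show False ..
qed

theorem theorem1:
  fixes n m :: nat and B :: "nat \<Rightarrow> nat set"
  assumes "n > 3" and "m \<ge> 1"
    and "\<forall>t\<le>m. B t \<subseteq> {..<n} \<and> card (B t) = 3"
    and "\<forall>t<m. card (B t - B (Suc t)) = 1"
    and "\<forall>t. 1 \<le> t \<and> t < m \<longrightarrow> loaded B t \<noteq> evicted B t"
    and "\<forall>a<n. \<forall>b<n. a \<noteq> b \<longrightarrow>
           (\<forall>i j k. i \<le> j \<and> j \<le> k \<and> k \<le> m \<and> {a, b} \<subseteq> B i \<and> {a, b} \<subseteq> B k
              \<longrightarrow> {a, b} \<subseteq> B j)"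
  shows "prefetching_supported_order n B m"
  unfolding prefetching_supported_order_def
proof (intro allI impI)
  fix t assume "t < m"
  then have Bt: "B t \<subseteq> {..<n}" "3 \<le> card (B t)"
    using assms(3) by auto
  show "\<exists>a b. a < n \<and> b < n \<and> pending B t a b \<and> evicted B t \<notin> {a, b}"
  proof (cases t)
    case 0
    obtain a where "a \<in> B t" "a \<noteq> evicted B t"
      using card_ge_3_obtains_other[OF Bt(2)] by blast
    then show ?thesis
      using Bt(1) 0 pending_0_iff by auto
  next
    case (Suc p)
    have "B p \<subseteq> {..<n}" "B t \<subseteq> {..<n}" "card (B p) = card (B t)"
      using assms(3) \<open>t < m\<close> Suc by auto
    then have "card (B t - B p) = card (B p - B t)"
      by (simp add: card_Diff_commute finite_subset)
    also have "\<dots> = 1"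
      using assms(4) \<open>t < m\<close> Suc by auto
    finally have "card (B t - B p) = 1" .
    then have l: "loaded B t \<in> B t" "loaded B t \<notin> B p" and "loaded B t \<noteq> evicted B t"
      using loaded_mem Suc assms(5) \<open>t < m\<close> by auto
    obtain y where y: "y \<in> B t" "y \<noteq> loaded B t" "y \<noteq> evicted B t"
      using card_ge_3_obtains_other[OF Bt(2)] by blast
    have "loaded B t < n" "y < n"
      using Bt(1) l(1) y(1) by auto
    then have "consecutive_pair B m (loaded B t) y"
      using assms(6) y(2) unfolding consecutive_pair_def by metis
    then have "pending B t (loaded B t) y"
      using pending_if_not_subset_previous \<open>t < m\<close> Suc l y(1) by auto
    moreover have "evicted B t \<notin> {loaded B t, y}"
      using y(3) \<open>loaded B t \<noteq> evicted B t\<close> by auto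
    ultimately show ?thesis
      using \<open>loaded B t < n\<close> \<open>y < n\<close> by blast
  qed
qed

end
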